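(* Let $C$ be a binary linear self-dual code of length $n$, let $i\in\{1,\dots,n\}$ be a coordinate position, and for $\delta\in\{0,1\}$ and $0\le k\le n$ let $$A_{k,\delta}=\left|\{v\in C : wt(v)=k,\ v[i]=\delta\}\right|.$$ Let $A_k$ be the number of codewords of $C$ of Hamming weight $k$ and $\rho=\sqrt2-1$. Then $$\sum_{k=0}^{n}A_{k,1}\rho^{k-1}=\sum_{k=0}^{n}A_{k,0}\rho^{k+1}\qquad\text{and}\qquad \sum_{k=0}^{n}A_{k,1}\rho^{k-1}=\frac{1+\rho}{4}\sum_{k=0}^{n}A_k\rho^{k}.$$ In particular, $\sum_{k=0}^{n}A_{k,1}\rho^{k-1}$ does not depend on the choice of the coordinate $i$.
   Context: A binary linear self-dual code $C$ of length $n$ is a linear subspace of $F^n$, $F=\{0,1\}$ the binary field, of dimension $n/2$ equal to its orthogonal complement under the standard dot product. $wt(v)$ denotes Hamming weight and $v[i]$ the $i$-th coordinate of $v$. *)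

theory Defs
  imports "HOL-Analysis.Analysis"
begin

text \<open>Binary vectors of length n are modelled as functions nat => bool that are
False outside {0..<n} (True = 1). Coordinates are indexed 0..n-1.\<close>

definition bvecs :: "nat \<Rightarrow> (nat \<Rightarrow> bool) set" where
  "bvecs n = {v. \<forall>j. n \<le> j \<longrightarrow> \<not> v j}"

definition bzero :: "nat \<Rightarrow> bool" where
  "bzero = (\<lambda>_. False)"

definition badd :: "(nat \<Rightarrow> bool) \<Rightarrow> (nat \<Rightarrow> bool) \<Rightarrow> (nat \<Rightarrow> bool)" where
  "badd u v = (\<lambda>j. u j \<noteq> v j)"

definition wt :: "nat \<Rightarrow> (nat \<Rightarrow> bool) \<Rightarrow> nat" where
  "wt n v = card {j. j < n \<and> v j}"

definition bdot :: "nat \<Rightarrow> (nat \<Rightarrow> bool) \<Rightarrow> (nat \<Rightarrow> bool) \<Rightarrow> bool" where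
  "bdot n u v = odd (card {j. j < n \<and> u j \<and> v j})"

text \<open>Linear code (subspace of F^n over the binary field: contains 0, closed under +;
scalar multiples are 0 or the vector itself).\<close>
definition binary_linear_code :: "nat \<Rightarrow> (nat \<Rightarrow> bool) set \<Rightarrow> bool" where
  "binary_linear_code n C \<longleftrightarrow> C \<subseteq> bvecs n \<and> bzero \<in> C \<and>
     (\<forall>u\<in>C. \<forall>v\<in>C. badd u v \<in> C)"

definition dual_code :: "nat \<Rightarrow> (nat \<Rightarrow> bool) set \<Rightarrow> (nat \<Rightarrow> bool) set" where
  "dual_code n C = {u \<in> bvecs n. \<forall>v\<in>C. \<not> bdot n u v}"

definition self_dual :: "nat \<Rightarrow> (nat \<Rightarrow> bool) set \<Rightarrow> bool" where
  "self_dual n C \<longleftrightarrow> binary_linear_code n C \<and> C = dual_code n C"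

definition A_cnt :: "nat \<Rightarrow> (nat \<Rightarrow> bool) set \<Rightarrow> nat \<Rightarrow> nat" where
  "A_cnt n C k = card {v \<in> C. wt n v = k}"

definition A_pos :: "nat \<Rightarrow> (nat \<Rightarrow> bool) set \<Rightarrow> nat \<Rightarrow> nat \<Rightarrow> bool \<Rightarrow> nat" where
  "A_pos n C i k \<delta> = card {v \<in> C. wt n v = k \<and> v i = \<delta>}"

end

theory Submission
  imports Defs
begin

text \<open>For a self-dual code the MacWilliams transform of the product weight
\<open>\<Prod>\<^sub>j g\<^sub>j(w\<^sub>j)\<close> summed over \<open>C\<close> is the same sum up to the factor \<open>|C|\<close>.
Give coordinate \<open>i\<close> the weights \<open>(a, b)\<close> and every other coordinate the weights \<open>(1, \<rho>)\<close>.
Since \<open>1 - \<rho> = (1 + \<rho>) \<rho>\<close>, the transformed weights off \<open>i\<close> are again proportional to \<open>(1, \<rho>)\<close>,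
so for the punctured enumerators \<open>X\<close> (codewords with \<open>v[i] = 0\<close>) and \<open>Y\<close> (with \<open>v[i] = 1\<close>)
one gets \<open>|C| X = K (X + Y)\<close> and \<open>|C| Y = K (X - Y)\<close> with \<open>K = (1 + \<rho>)\<^bsup>n-1\<^esup>\<close>. Eliminating \<open>|C|/K\<close> gives
\<open>(X + Y)\<^sup>2 = 2 X\<^sup>2\<close>, i.e. \<open>Y = \<rho> X\<close>, and both claimed identities are rewritings of this.\<close>

lemma bvecs_eq_image_Pow: "bvecs n = (\<lambda>S j. j \<in> S) ` Pow {..<n}"
proof
  show "bvecs n \<subseteq> (\<lambda>S j. j \<in> S) ` Pow {..<n}"
  proof
    fix v assume "v \<in> bvecs n"
    hence "{j. v j} \<in> Pow {..<n}" unfolding bvecs_def by (auto simp: not_le[symmetric])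
    moreover have "v = (\<lambda>j. j \<in> {j. v j})" by auto
    ultimately show "v \<in> (\<lambda>S j. j \<in> S) ` Pow {..<n}" by blast
  qed
  show "(\<lambda>S j. j \<in> S) ` Pow {..<n} \<subseteq> bvecs n" unfolding bvecs_def by auto
qed

lemma finite_bvecs: "finite (bvecs n)"
  unfolding bvecs_eq_image_Pow by simp

lemma sum_bvecs_prod:
  fixes h :: "nat \<Rightarrow> bool \<Rightarrow> 'a::comm_semiring_1"
  shows "(\<Sum>w\<in>bvecs n. \<Prod>j<n. h j (w j)) = (\<Prod>j<n. h j False + h j True)"
proof -
  have inj: "inj_on (\<lambda>S j. j \<in> S) (Pow {..<n})"
    by (auto simp: inj_on_def fun_eq_iff set_eq_iff)
  have "(\<Sum>w\<in>bvecs n. \<Prod>j<n. h j (w j)) = (\<Sum>S\<in>Pow {..<n}. \<Prod>j<n. h j (j \<in> S))"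
    unfolding bvecs_eq_image_Pow by (simp add: sum.reindex[OF inj])
  also have "\<dots> = (\<Sum>S\<in>Pow {..<n}. (\<Prod>j\<in>S. h j True) * (\<Prod>j\<in>{..<n}-S. h j False))"
  proof (rule sum.cong[OF refl])
    fix S assume "S \<in> Pow {..<n}"
    hence "{..<n} \<inter> {j. j \<in> S} = S" "{..<n} \<inter> - {j. j \<in> S} = {..<n} - S" by auto
    moreover have "(\<Prod>j<n. h j (j \<in> S)) = (\<Prod>j<n. if j \<in> S then h j True else h j False)"
      by (rule prod.cong) auto
    ultimately show "(\<Prod>j<n. h j (j \<in> S)) = (\<Prod>j\<in>S. h j True) * (\<Prod>j\<in>{..<n}-S. h j False)"
      using prod.If_cases[of "{..<n}" "\<lambda>j. j \<in> S" "\<lambda>j. h j True" "\<lambda>j. h j False"] by simp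
  qed
  also have "\<dots> = (\<Prod>j<n. h j True + h j False)"
    by (rule prod_add[symmetric]) simp
  finally show ?thesis by (simp add: add.commute)
qed

lemma prod_if_eq_power:
  fixes c :: "'a::comm_monoid_mult"
  assumes "finite A"
  shows "(\<Prod>j\<in>A. if P j then c else 1) = c ^ card {j\<in>A. P j}"
  using assms by (simp add: prod.If_cases Int_def)

lemma odd_card_sym_diff:
  assumes "finite A" "finite B"
  shows "odd (card ((A - B) \<union> (B - A))) \<longleftrightarrow> (odd (card A) \<noteq> odd (card B))"
proof -
  have "card ((A - B) \<union> (B - A)) = card (A - B) + card (B - A)"
    by (rule card_Un_disjoint) (use assms in auto)
  moreover have "card A = card (A - B) + card (A \<inter> B)" "card B = card (B - A) + card (A \<inter> B)"
    using assms card_Int_Diff[of A B] card_Int_Diff[of B A] by (auto simp: Int_commute)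
  ultimately show ?thesis by auto
qed

lemma bdot_commute: "bdot n u v = bdot n v u"
  unfolding bdot_def by (simp add: conj_commute)

lemma bdot_badd_left: "bdot n (badd u u') w \<longleftrightarrow> (bdot n u w \<noteq> bdot n u' w)"
proof -
  let ?A = "{j. j < n \<and> u j \<and> w j}" and ?B = "{j. j < n \<and> u' j \<and> w j}"
  have "{j. j < n \<and> badd u u' j \<and> w j} = (?A - ?B) \<union> (?B - ?A)"
    unfolding badd_def by auto
  then show ?thesis unfolding bdot_def using odd_card_sym_diff[of ?A ?B] by simp
qed

lemma badd_cancel: "badd (badd v u) u = v"
  unfolding badd_def by auto

lemma finite_self_dual: "self_dual n C \<Longrightarrow> finite C"
  unfolding self_dual_def binary_linear_code_def using finite_bvecs finite_subset by blast

definition dot_sign :: "nat \<Rightarrow> (nat \<Rightarrow> bool) \<Rightarrow> (nat \<Rightarrow> bool) \<Rightarrow> real" where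
  "dot_sign n v w = (if bdot n v w then -1 else 1)"

lemma dot_sign_eq_prod: "dot_sign n v w = (\<Prod>j<n. if v j \<and> w j then -1 else 1)"
  by (simp add: dot_sign_def bdot_def prod_if_eq_power minus_one_power_iff)

text \<open>If \<open>w \<notin> C = C\<^sup>\<perp>\<close>, some \<open>v\<^sub>0 \<in> C\<close> has \<open>v\<^sub>0 \<cdot> w = 1\<close>, and translating by \<open>v\<^sub>0\<close> flips every sign.\<close>

lemma sum_dot_sign_self_dual:
  assumes sd: "self_dual n C" and w: "w \<in> bvecs n"
  shows "(\<Sum>v\<in>C. dot_sign n v w) = (if w \<in> C then real (card C) else 0)"
proof (cases "w \<in> C")
  case True
  hence "w \<in> dual_code n C" using sd unfolding self_dual_def by auto
  hence "\<forall>v\<in>C. dot_sign n v w = 1" unfolding dual_code_def dot_sign_def by (auto simp: bdot_commute)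
  thus ?thesis using True by simp
next
  case False
  have lin: "binary_linear_code n C" and eq: "C = dual_code n C"
    using sd unfolding self_dual_def by auto
  from False w eq obtain v0 where v0: "v0 \<in> C" "bdot n w v0" unfolding dual_code_def by auto
  have closed: "\<And>v. v \<in> C \<Longrightarrow> badd v v0 \<in> C" using lin v0 unfolding binary_linear_code_def by auto
  have "(\<Sum>v\<in>C. dot_sign n v w) = (\<Sum>v\<in>C. dot_sign n (badd v v0) w)"
    by (rule sum.reindex_bij_witness[where i="\<lambda>v. badd v v0" and j="\<lambda>v. badd v v0"])
       (auto simp: badd_cancel closed)
  also have "\<dots> = (\<Sum>v\<in>C. - dot_sign n v w)"
    using v0 bdot_commute[of n w v0] by (intro sum.cong) (auto simp: dot_sign_def bdot_badd_left)
  finally have "(\<Sum>v\<in>C. dot_sign n v w) = 0" by (simp add: sum_negf)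
  thus ?thesis using False by simp
qed

lemma macwilliams_self_dual_prod:
  fixes g :: "nat \<Rightarrow> bool \<Rightarrow> real"
  assumes sd: "self_dual n C"
  shows "real (card C) * (\<Sum>w\<in>C. \<Prod>j<n. g j (w j))
       = (\<Sum>v\<in>C. \<Prod>j<n. g j False + (if v j then -1 else 1) * g j True)"
proof -
  have sub: "C \<subseteq> bvecs n" using sd unfolding self_dual_def binary_linear_code_def by auto
  have "(\<Sum>v\<in>C. \<Prod>j<n. g j False + (if v j then -1 else 1) * g j True)
      = (\<Sum>v\<in>C. \<Sum>w\<in>bvecs n. \<Prod>j<n. (if v j \<and> w j then -1 else 1) * g j (w j))"
    using sum_bvecs_prod[of "\<lambda>j x. (if _ j \<and> x then -1 else 1) * g j x" n] by simp
  also have "\<dots> = (\<Sum>v\<in>C. \<Sum>w\<in>bvecs n. dot_sign n v w * (\<Prod>j<n. g j (w j)))"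
    by (simp add: dot_sign_eq_prod prod.distrib)
  also have "\<dots> = (\<Sum>w\<in>bvecs n. (\<Sum>v\<in>C. dot_sign n v w) * (\<Prod>j<n. g j (w j)))"
    by (subst sum.swap) (simp add: sum_distrib_right)
  also have "\<dots> = (\<Sum>w\<in>bvecs n. if w \<in> C then real (card C) * (\<Prod>j<n. g j (w j)) else 0)"
    by (rule sum.cong) (auto simp: sum_dot_sign_self_dual[OF sd])
  also have "\<dots> = (\<Sum>w\<in>C. real (card C) * (\<Prod>j<n. g j (w j)))"
    using sum.inter_restrict[OF finite_bvecs[of n], of "\<lambda>w. real (card C) * (\<Prod>j<n. g j (w j))" C] sub
    by (simp add: Int_absorb1)
  finally show ?thesis by (simp add: sum_distrib_left)
qed

definition punctured_enum :: "nat \<Rightarrow> (nat \<Rightarrow> bool) set \<Rightarrow> nat \<Rightarrow> bool \<Rightarrow> real \<Rightarrow> real" where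
  "punctured_enum n C i \<delta> t = (\<Sum>v | v \<in> C \<and> v i = \<delta>. t ^ card {j. j < n \<and> j \<noteq> i \<and> v j})"

lemma sum_split_coordinate:
  fixes f :: "(nat \<Rightarrow> bool) \<Rightarrow> real"
  assumes "finite C"
  shows "(\<Sum>v\<in>C. f v) = (\<Sum>v | v \<in> C \<and> v i = False. f v) + (\<Sum>v | v \<in> C \<and> v i = True. f v)"
proof -
  have "C = {v \<in> C. v i = False} \<union> {v \<in> C. v i = True}" by auto
  then show ?thesis using assms by (subst (1) \<open>C = _\<close>, subst sum.union_disjoint) auto
qed

lemma macwilliams_punctured_enum:
  fixes t a b :: real
  assumes sd: "self_dual n C" and i: "i < n" and t: "1 - t = (1 + t) * t"
  shows "real (card C) * (a * punctured_enum n C i False t + b * punctured_enum n C i True t)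
       = (1 + t) ^ (n - 1) * ((a + b) * punctured_enum n C i False t
                             + (a - b) * punctured_enum n C i True t)"
proof -
  define g where "g j x = (if j = i then (if x then b else a) else (if x then t else 1))" for j x
  define P where "P v = t ^ card {j. j < n \<and> j \<noteq> i \<and> v j}" for v :: "nat \<Rightarrow> bool"
  have fC: "finite C" using finite_self_dual[OF sd] .
  have i_in: "i \<in> {..<n}" using i by simp
  have off_i: "{j \<in> {..<n}-{i}. v j} = {j. j < n \<and> j \<noteq> i \<and> v j}" for v :: "nat \<Rightarrow> bool"
    by auto
  have lhs: "(\<Prod>j<n. g j (w j)) = (if w i then b else a) * P w" for w
  proof -
    have "(\<Prod>j\<in>{..<n}-{i}. g j (w j)) = (\<Prod>j\<in>{..<n}-{i}. if w j then t else 1)"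
      unfolding g_def by (rule prod.cong) auto
    then show ?thesis
      using prod.remove[OF _ i_in, of "\<lambda>j. g j (w j)"]
      by (simp add: P_def g_def prod_if_eq_power off_i)
  qed
  have rhs: "(\<Prod>j<n. g j False + (if v j then -1 else 1) * g j True)
           = (if v i then a - b else a + b) * ((1 + t) ^ (n - 1) * P v)" for v
  proof -
    have "(\<Prod>j\<in>{..<n}-{i}. g j False + (if v j then -1 else 1) * g j True)
        = (\<Prod>j\<in>{..<n}-{i}. (1 + t) * (if v j then t else 1))"
      unfolding g_def using t by (intro prod.cong) auto
    also have "\<dots> = (1 + t) ^ (n - 1) * P v"
      using i by (simp add: prod.distrib prod_if_eq_power off_i P_def)
    finally show ?thesis
      using prod.remove[OF _ i_in, of "\<lambda>j. g j False + (if v j then -1 else 1) * g j True"]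
      by (simp add: g_def)
  qed
  have sums: "(\<Sum>v\<in>C. (if v i then y else x) * P v)
            = x * punctured_enum n C i False t + y * punctured_enum n C i True t" for x y
    by (simp add: sum_split_coordinate[OF fC, of _ i] punctured_enum_def P_def sum_distrib_left)
  have "real (card C) * (\<Sum>w\<in>C. (if w i then b else a) * P w)
      = (\<Sum>v\<in>C. (if v i then a - b else a + b) * ((1 + t) ^ (n - 1) * P v))"
    using macwilliams_self_dual_prod[OF sd, of g] by (simp only: lhs rhs)
  also have "\<dots> = (1 + t) ^ (n - 1) * (\<Sum>v\<in>C. (if v i then a - b else a + b) * P v)"
    by (simp add: sum_distrib_left mult_ac)
  finally show ?thesis by (simp only: sums)
qed

lemma sqrt2_minus_1_fixed_point: "1 - (sqrt 2 - 1) = (1 + (sqrt 2 - 1)) * (sqrt 2 - 1 :: real)"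
  by (simp add: algebra_simps)

lemma punctured_enum_True_eq:
  assumes sd: "self_dual n C" and i: "i < n" and \<rho>: "\<rho> = sqrt 2 - 1"
  shows "punctured_enum n C i True \<rho> = \<rho> * punctured_enum n C i False \<rho>"
proof -
  define X where "X = punctured_enum n C i False \<rho>"
  define Y where "Y = punctured_enum n C i True \<rho>"
  define c where "c = real (card C)"
  define K where "K = (1 + \<rho>) ^ (n - 1)"
  have fC: "finite C" using finite_self_dual[OF sd] .
  have \<rho>_pos: "\<rho> > 0" using \<rho> by (simp add: real_less_rsqrt)
  have zero: "bzero \<in> C" using sd unfolding self_dual_def binary_linear_code_def by auto
  have X_ge_1: "X \<ge> 1"
  proof -
    have "\<rho> ^ card {j. j < n \<and> j \<noteq> i \<and> bzero j} \<le> X"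
      unfolding X_def punctured_enum_def
      by (rule member_le_sum) (use zero fC \<rho>_pos in \<open>auto simp: bzero_def\<close>)
    then show ?thesis by (simp add: bzero_def)
  qed
  have Y_nonneg: "Y \<ge> 0" unfolding Y_def punctured_enum_def using \<rho>_pos by (intro sum_nonneg) auto
  have c_pos: "c > 0" unfolding c_def using zero fC card_gt_0_iff by auto
  have cX: "c * X = K * (X + Y)"
    using macwilliams_punctured_enum[OF sd i, of \<rho> 1 0] sqrt2_minus_1_fixed_point
    unfolding c_def K_def X_def Y_def \<rho> by simp
  have cY: "c * Y = K * (X - Y)"
    using macwilliams_punctured_enum[OF sd i, of \<rho> 0 1] sqrt2_minus_1_fixed_point
    unfolding c_def K_def X_def Y_def \<rho> by simp
  have "c * (X * (X - Y)) = K * (X + Y) * (X - Y)"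
    by (simp only: mult.assoc[symmetric] cX)
  also have "\<dots> = c * (Y * (X + Y))"
    by (simp only: mult.assoc[symmetric] cY) (simp add: mult_ac)
  finally have "X * (X - Y) = Y * (X + Y)"
    using c_pos by simp
  then have "(X + Y)\<^sup>2 = (sqrt 2 * X)\<^sup>2"
    by (simp add: algebra_simps power2_eq_square)
  then have "X + Y = sqrt 2 * X"
    using X_ge_1 Y_nonneg by (simp add: power2_eq_iff_nonneg)
  then show ?thesis unfolding X_def Y_def \<rho> by (simp add: algebra_simps)
qed

lemma wt_eq_punctured_weight:
  assumes "i < n"
  shows "wt n v = card {j. j < n \<and> j \<noteq> i \<and> v j} + of_bool (v i)"
proof (cases "v i")
  case True
  then have "{j. j < n \<and> v j} = insert i {j. j < n \<and> j \<noteq> i \<and> v j}" using assms by auto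
  then show ?thesis unfolding wt_def using True by simp
next
  case False
  then have "{j. j < n \<and> v j} = {j. j < n \<and> j \<noteq> i \<and> v j}" by auto
  then show ?thesis unfolding wt_def using False by simp
qed

lemma wt_le: "wt n v \<le> n"
  unfolding wt_def using card_mono[of "{..<n}" "{j. j < n \<and> v j}"] by auto

lemma sum_card_wt_fibres:
  fixes h :: "nat \<Rightarrow> real"
  assumes "finite S"
  shows "(\<Sum>k=0..n. real (card {v\<in>S. wt n v = k}) * h k) = (\<Sum>v\<in>S. h (wt n v))"
  using sum.group[OF assms finite_atLeastAtMost, of "wt n" 0 n "\<lambda>v. h (wt n v)"] wt_le
  by (auto simp: atLeast0AtMost)

lemma sum_A_pos:
  fixes h :: "nat \<Rightarrow> real"
  assumes "self_dual n C"
  shows "(\<Sum>k=0..n. real (A_pos n C i k \<delta>) * h k) = (\<Sum>v | v \<in> C \<and> v i = \<delta>. h (wt n v))"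
proof -
  have "{v \<in> C. wt n v = k \<and> v i = \<delta>} = {v \<in> {v. v \<in> C \<and> v i = \<delta>}. wt n v = k}" for k
    by auto
  then show ?thesis
    unfolding A_pos_def using sum_card_wt_fibres[of "{v. v \<in> C \<and> v i = \<delta>}"] finite_self_dual[OF assms]
    by simp
qed

lemma sum_A_cnt:
  fixes h :: "nat \<Rightarrow> real"
  assumes "self_dual n C"
  shows "(\<Sum>k=0..n. real (A_cnt n C k) * h k) = (\<Sum>v\<in>C. h (wt n v))"
  unfolding A_cnt_def using sum_card_wt_fibres finite_self_dual[OF assms] by simp

theorem theorem7:
  fixes n :: nat and C :: "(nat \<Rightarrow> bool) set" and i :: nat and \<rho> :: real
  assumes "self_dual n C"
    and "i < n"
    and "\<rho> = sqrt 2 - 1"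
  shows "(\<Sum>k=0..n. real (A_pos n C i k True) * \<rho> powi (int k - 1))
           = (\<Sum>k=0..n. real (A_pos n C i k False) * \<rho> ^ (k + 1))
       \<and> (\<Sum>k=0..n. real (A_pos n C i k True) * \<rho> powi (int k - 1))
           = (1 + \<rho>) / 4 * (\<Sum>k=0..n. real (A_cnt n C k) * \<rho> ^ k)"
proof -
  note sd = assms(1) and wt_split = wt_eq_punctured_weight[OF assms(2)]
  define X where "X = punctured_enum n C i False \<rho>"
  have Y: "punctured_enum n C i True \<rho> = \<rho> * X"
    unfolding X_def using punctured_enum_True_eq[OF assms] .
  have lhs: "(\<Sum>k=0..n. real (A_pos n C i k True) * \<rho> powi (int k - 1)) = \<rho> * X"
    by (simp add: sum_A_pos[OF sd] wt_split Y[symmetric] punctured_enum_def)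
  have rhs1: "(\<Sum>k=0..n. real (A_pos n C i k False) * \<rho> ^ (k + 1)) = \<rho> * X"
    by (simp add: sum_A_pos[OF sd] wt_split X_def punctured_enum_def sum_distrib_left)
  have "(\<Sum>k=0..n. real (A_cnt n C k) * \<rho> ^ k) = (\<Sum>v\<in>C. \<rho> ^ wt n v)"
    by (rule sum_A_cnt[OF sd])
  also have "\<dots> = X + \<rho> * punctured_enum n C i True \<rho>"
    by (subst sum_split_coordinate[OF finite_self_dual[OF sd], of _ i])
       (simp add: wt_split X_def punctured_enum_def sum_distrib_left)
  finally have enum: "(\<Sum>k=0..n. real (A_cnt n C k) * \<rho> ^ k) = X + \<rho> * (\<rho> * X)"
    by (simp only: Y)
  have "(1 + \<rho>) / 4 * (\<Sum>k=0..n. real (A_cnt n C k) * \<rho> ^ k) = (1 + \<rho>) * (1 + \<rho>\<^sup>2) * X / 4"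
    unfolding enum by (simp add: field_simps power2_eq_square)
  also have "(1 + \<rho>) * (1 + \<rho>\<^sup>2) = 4 * \<rho>"
    unfolding assms(3) by (simp add: algebra_simps power2_eq_square)
  finally have rhs2: "(1 + \<rho>) / 4 * (\<Sum>k=0..n. real (A_cnt n C k) * \<rho> ^ k) = \<rho> * X"
    by simp
  show ?thesis using lhs rhs1 rhs2 by simp
qed

end
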